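(* Let $A_1,A_2,B_1,B_2\in\mathbb T$ and let $\boldsymbol\mu$ be a ratio set. Assume $A_1\prec^{\boldsymbol\mu}A_2$, $B_1\prec^{\boldsymbol\mu}B_2$, and $\boldsymbol\mu$ witnesses $B_2$. Then $A_1B_1\prec^{\boldsymbol\mu}A_2B_2$.
   Context: $\mathbb T$ is the field of real grid-based transseries over the totally ordered group $\mathfrak G$ of transmonomials; $\operatorname{mag}T$ is the dominant monomial of $T\ne0$. A ratio set is a finite $\boldsymbol\mu\subset\{\mathfrak g\in\mathfrak G:\mathfrak g\prec1\}$; $\boldsymbol\mu^*$ (resp. $\boldsymbol\mu^+$) is the set of products of zero or more (resp. one or more) elements of $\boldsymbol\mu$. Monomials: $\mathfrak m\prec^{\boldsymbol\mu}\mathfrak n$ iff $\mathfrak m/\mathfrak n\in\boldsymbol\mu^+$. Transseries: $A\prec^{\boldsymbol\mu}B$ iff every $\mathfrak a\in\operatorname{supp}A$ satisfies $\mathfrak a\prec^{\boldsymbol\mu}\mathfrak b$ for some $\mathfrak b\in\operatorname{supp}B$. $\boldsymbol\mu$ witnesses nonzero $T$ iff $\operatorname{supp}T\subseteq(\operatorname{mag}T)\boldsymbol\mu^*$. *)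

theory Defs
  imports Complex_Main
begin

text \<open>Monomials form a totally ordered abelian group, written additively:
  the product of monomials is +, and m \<prec> n is m < n (so m \<prec> 1 is m < 0).\<close>

definition supp :: "('g \<Rightarrow> real) \<Rightarrow> 'g set" where
  "supp A = {g. A g \<noteq> 0}"

definition ratio_set :: "'g::linordered_ab_group_add set \<Rightarrow> bool" where
  "ratio_set mu \<longleftrightarrow> finite mu \<and> mu \<subseteq> {g. g < 0}"

definition mstar :: "'g::linordered_ab_group_add set \<Rightarrow> 'g set" where
  "mstar mu = {sum_list xs | xs. set xs \<subseteq> mu}"

definition mplus :: "'g::linordered_ab_group_add set \<Rightarrow> 'g set" where
  "mplus mu = {sum_list xs | xs. set xs \<subseteq> mu \<and> xs \<noteq> []}"

definition grid_based :: "'g::linordered_ab_group_add set \<Rightarrow> bool" where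
  "grid_based S \<longleftrightarrow> (\<exists>mu n. ratio_set mu \<and> S \<subseteq> {n + m | m. m \<in> mstar mu})"

definition gb_series :: "('g::linordered_ab_group_add \<Rightarrow> real) \<Rightarrow> bool" where
  "gb_series A \<longleftrightarrow> grid_based (supp A)"

text \<open>Product of series (Cauchy product; the sum is finite for grid-based series).\<close>
definition ser_mult :: "('g::linordered_ab_group_add \<Rightarrow> real) \<Rightarrow> ('g \<Rightarrow> real) \<Rightarrow> 'g \<Rightarrow> real" where
  "ser_mult A B g = (\<Sum>p\<in>{(a, b). a \<in> supp A \<and> b \<in> supp B \<and> a + b = g}. A (fst p) * B (snd p))"

definition mag :: "('g::linordered_ab_group_add \<Rightarrow> real) \<Rightarrow> 'g" where
  "mag T = (GREATEST g. g \<in> supp T)"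

definition mono_prec :: "'g::linordered_ab_group_add set \<Rightarrow> 'g \<Rightarrow> 'g \<Rightarrow> bool" where
  "mono_prec mu m n \<longleftrightarrow> m - n \<in> mplus mu"

definition ser_prec :: "'g::linordered_ab_group_add set \<Rightarrow> ('g \<Rightarrow> real) \<Rightarrow> ('g \<Rightarrow> real) \<Rightarrow> bool" where
  "ser_prec mu A B \<longleftrightarrow> (\<forall>a\<in>supp A. \<exists>b\<in>supp B. mono_prec mu a b)"

definition witnesses :: "'g::linordered_ab_group_add set \<Rightarrow> ('g \<Rightarrow> real) \<Rightarrow> bool" where
  "witnesses mu T \<longleftrightarrow> T \<noteq> (\<lambda>_. 0) \<and> supp T \<subseteq> {mag T + m | m. m \<in> mstar mu}"

end

theory Submission
  imports Defs
begin

text \<open>Let \<open>a\<^sub>1 + b\<^sub>1\<close> be a term of \<open>A\<^sub>1B\<^sub>1\<close>, with \<open>a\<^sub>1 \<prec>\<^sup>\<mu> a\<^sub>2 \<in> supp A\<^sub>2\<close> and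
  \<open>b\<^sub>1 \<prec>\<^sup>\<mu> b\<^sub>2 \<in> supp B\<^sub>2\<close>. Since a finitely generated monoid of infinitesimals has no
  strictly increasing sequences, every nonempty subset of a grid has a greatest element.
  Take the greatest \<open>a \<in> supp A\<^sub>2\<close> with \<open>a\<^sub>1 - a \<in> \<mu>\<^sup>*\<close>. Because \<open>\<mu>\<close> witnesses \<open>B\<^sub>2\<close>, any other
  decomposition of \<open>a + mag B\<^sub>2\<close> would produce a larger such \<open>a\<close>, so \<open>a + mag B\<^sub>2\<close> lies in the
  support of \<open>A\<^sub>2B\<^sub>2\<close>; and \<open>a\<^sub>1 + b\<^sub>1 - (a + mag B\<^sub>2) = (b\<^sub>1 - b\<^sub>2) + (a\<^sub>1 - a) + (b\<^sub>2 - mag B\<^sub>2) \<in> \<mu>\<^sup>+\<close>.\<close>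

lemma zero_in_mstar: "0 \<in> mstar mu"
  unfolding mstar_def by (auto intro!: exI[of _ "[]"])

lemma mstar_generator: "g \<in> mu \<Longrightarrow> g \<in> mstar mu"
  unfolding mstar_def by (auto intro!: exI[of _ "[g]"])

lemma mplus_subset_mstar: "mplus mu \<subseteq> mstar mu"
  unfolding mplus_def mstar_def by blast

lemma mstar_add:
  assumes "x \<in> mstar mu" "y \<in> mstar mu"
  shows "x + y \<in> mstar mu"
proof -
  obtain xs ys where "set xs \<subseteq> mu" "x = sum_list xs" "set ys \<subseteq> mu" "y = sum_list ys"
    using assms unfolding mstar_def by auto
  then show ?thesis unfolding mstar_def by (intro CollectI exI[of _ "xs @ ys"]) auto
qed

lemma mplus_add_mstar:
  assumes "x \<in> mplus mu" "y \<in> mstar mu"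
  shows "x + y \<in> mplus mu"
proof -
  obtain xs ys where "set xs \<subseteq> mu" "x = sum_list xs" "xs \<noteq> []" "set ys \<subseteq> mu" "y = sum_list ys"
    using assms unfolding mplus_def mstar_def by auto
  then show ?thesis unfolding mplus_def by (intro CollectI exI[of _ "xs @ ys"]) auto
qed

lemma mstar_insert_decompose:
  assumes "x \<in> mstar (insert g mu)"
  obtains n m where "m \<in> mstar mu" "x = sum_list (replicate n g) + m"
proof -
  obtain xs where "set xs \<subseteq> insert g mu" "x = sum_list xs"
    using assms unfolding mstar_def by auto
  then have "\<exists>n m. m \<in> mstar mu \<and> x = sum_list (replicate n g) + m"
  proof (induction xs arbitrary: x)
    case Nil
    then show ?case using zero_in_mstar by (auto intro!: exI[of _ 0])
  next
    case (Cons y xs)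
    then obtain n m where m: "m \<in> mstar mu" "sum_list xs = sum_list (replicate n g) + m"
      by auto
    show ?case
    proof (cases "y = g")
      case True
      then show ?thesis
        using m Cons.prems by (auto intro!: exI[of _ "Suc n"] simp: add.assoc)
    next
      case False
      then have "y + m \<in> mstar mu"
        using Cons.prems m(1) by (auto intro: mstar_add mstar_generator)
      then show ?thesis
        using m Cons.prems by (intro exI[of _ n] exI[of _ "y + m"]) (auto simp: add_ac)
    qed
  qed
  then show ?thesis using that by blast
qed

lemma sum_list_replicate_antimono:
  fixes g :: "'g::ordered_ab_group_add"
  assumes "g \<le> 0" "n \<le> n'"
  shows "sum_list (replicate n' g) \<le> sum_list (replicate n g)"
  using assms(2)
proof (induction n' rule: dec_induct)
  case (step k)
  then show ?case using add_decreasing[OF assms(1) step.IH] by simp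
qed simp

lemma nat_seq_incseq_subseq:
  fixes s :: "nat \<Rightarrow> nat"
  obtains h where "strict_mono h" "incseq (s \<circ> h)"
proof -
  obtain f where f: "strict_mono f" "monoseq (s \<circ> f)"
    using seq_monosub by (auto simp: comp_def)
  show ?thesis
  proof (cases "incseq (s \<circ> f)")
    case True
    then show ?thesis using f(1) that by blast
  next
    case False
    then have dec: "decseq (s \<circ> f)"
      using f(2) unfolding monoseq_iff by blast
    obtain k0 where k0: "\<And>k. s (f k0) \<le> s (f k)"
      using ex_has_least_nat[of "\<lambda>_. True" 0 "s \<circ> f"] by auto
    have "\<And>j. s (f (j + k0)) = s (f k0)"
      using dec k0 by (metis comp_apply decseqD le_add2 le_antisym)
    then show ?thesis
      using that[of "\<lambda>j. f (j + k0)"] f(1) by (auto simp: strict_mono_def incseq_def)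
  qed
qed

lemma mstar_no_strict_mono:
  fixes mu :: "'g::linordered_ab_group_add set" and f :: "nat \<Rightarrow> 'g"
  assumes "finite mu" "\<And>g. g \<in> mu \<Longrightarrow> g \<le> 0" "range f \<subseteq> mstar mu"
  shows "\<not> strict_mono f"
  using assms
proof (induction mu arbitrary: f rule: finite_induct)
  case empty
  have "mstar {} = {0::'g}" unfolding mstar_def by auto
  then have "f 0 = f 1" using empty.prems(2) by (metis range_subsetD singletonD)
  then show ?case by (auto dest: strict_monoD[of f 0 1])
next
  case (insert g mu)
  show ?case
  proof
    assume f: "strict_mono f"
    have "\<forall>i. \<exists>n m. m \<in> mstar mu \<and> f i = sum_list (replicate n g) + m"
    proof
      fix i
      have "f i \<in> mstar (insert g mu)" using insert.prems(2) by auto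
      then obtain n m where "m \<in> mstar mu" "f i = sum_list (replicate n g) + m"
        by (rule mstar_insert_decompose)
      then show "\<exists>n m. m \<in> mstar mu \<and> f i = sum_list (replicate n g) + m" by blast
    qed
    then obtain N m where Nm: "\<And>i. m i \<in> mstar mu" "\<And>i. f i = sum_list (replicate (N i) g) + m i"
      by metis
    obtain h where h: "strict_mono h" "incseq (N \<circ> h)"
      using nat_seq_incseq_subseq by blast
    \<comment> \<open>along \<open>h\<close> the \<open>g\<close>-part is nonincreasing, so the \<open>\<mu>\<close>-part must still increase strictly\<close>
    have "strict_mono (m \<circ> h)"
    proof (rule strict_monoI)
      fix i j :: nat
      assume "i < j"
      then have "f (h i) < f (h j)" using f h(1) by (simp add: strict_mono_def)
      moreover have "sum_list (replicate (N (h j)) g) \<le> sum_list (replicate (N (h i)) g)"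
        using sum_list_replicate_antimono[of g] insert.prems(1) h(2) \<open>i < j\<close>
        by (simp add: incseq_def)
      ultimately have "f (h i) + - sum_list (replicate (N (h i)) g)
          < f (h j) + - sum_list (replicate (N (h j)) g)"
        by (intro add_less_le_mono) simp_all
      then show "(m \<circ> h) i < (m \<circ> h) j" using Nm(2) by simp
    qed
    moreover have "range (m \<circ> h) \<subseteq> mstar mu" using Nm(1) by auto
    moreover have "\<And>g'. g' \<in> mu \<Longrightarrow> g' \<le> 0" using insert.prems(1) by simp
    ultimately show False using insert.IH by blast
  qed
qed

lemma mstar_subset_has_greatest:
  fixes mu :: "'g::linordered_ab_group_add set"
  assumes "finite mu" "\<And>g. g \<in> mu \<Longrightarrow> g \<le> 0" "S \<subseteq> mstar mu" "x \<in> S"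
  obtains z where "z \<in> S" "\<And>y. y \<in> S \<Longrightarrow> y \<le> z"
proof -
  let ?R = "{(y, x). x \<in> S \<and> y \<in> S \<and> x < y}"
  have "wf ?R"
  proof (unfold wf_iff_no_infinite_down_chain, rule notI)
    assume "\<exists>f. \<forall>i. (f (Suc i), f i) \<in> ?R"
    then obtain f where "\<And>i. (f (Suc i), f i) \<in> ?R" by blast
    then have "strict_mono f" "range f \<subseteq> mstar mu"
      using assms(3) by (auto simp: strict_mono_Suc_iff)
    then show False using mstar_no_strict_mono assms(1,2) by blast
  qed
  then obtain z where z: "z \<in> S" "\<And>y. (y, z) \<in> ?R \<Longrightarrow> y \<notin> S"
    using assms(4) by (rule wfE_min) blast
  have "y \<le> z" if "y \<in> S" for y
  proof (rule ccontr)
    assume "\<not> y \<le> z"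
    then have "(y, z) \<in> ?R" using that z(1) by simp
    then show False using z(2) that by blast
  qed
  then show ?thesis using that z(1) by blast
qed

lemma grid_based_subset_has_greatest:
  fixes T :: "'g::linordered_ab_group_add set"
  assumes "grid_based T" "S \<subseteq> T" "x \<in> S"
  obtains z where "z \<in> S" "\<And>y. y \<in> S \<Longrightarrow> y \<le> z"
proof -
  obtain mu n where mu: "ratio_set mu" and T: "T \<subseteq> {n + m | m. m \<in> mstar mu}"
    using assms(1) grid_based_def by blast
  have fin: "finite mu" and nonpos: "\<And>g. g \<in> mu \<Longrightarrow> g \<le> 0"
    using mu unfolding ratio_set_def by auto
  have shifted: "(\<lambda>y. y - n) ` S \<subseteq> mstar mu"
  proof
    fix w
    assume "w \<in> (\<lambda>y. y - n) ` S"
    then obtain y where "y \<in> S" "w = y - n" by blast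
    moreover obtain m where "m \<in> mstar mu" "y = n + m"
      using T assms(2) \<open>y \<in> S\<close> by blast
    ultimately show "w \<in> mstar mu" by simp
  qed
  have "x - n \<in> (\<lambda>y. y - n) ` S" using assms(3) by blast
  then obtain z where z: "z \<in> (\<lambda>y. y - n) ` S" "\<And>y. y \<in> (\<lambda>y. y - n) ` S \<Longrightarrow> y \<le> z"
    using mstar_subset_has_greatest[OF fin nonpos shifted] by blast
  obtain z' where "z' \<in> S" "z = z' - n" using z(1) by blast
  have "y \<le> z'" if "y \<in> S" for y
  proof -
    have "y - n \<le> z' - n" using z(2) that \<open>z = z' - n\<close> by blast
    then show "y \<le> z'" by simp
  qed
  then show ?thesis using that \<open>z' \<in> S\<close> by blast
qed

lemma supp_ser_mult_decompose:
  assumes "x \<in> supp (ser_mult A B)"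
  obtains a b where "a \<in> supp A" "b \<in> supp B" "a + b = x"
proof -
  have "ser_mult A B x \<noteq> 0" using assms by (simp add: supp_def)
  then have "{(a, b). a \<in> supp A \<and> b \<in> supp B \<and> a + b = x} \<noteq> {}"
    unfolding ser_mult_def by (metis sum.empty)
  then show ?thesis using that by blast
qed

lemma supp_ser_mult_unique_decomposition:
  assumes "a0 \<in> supp A" "b0 \<in> supp B"
    and "\<And>a b. a \<in> supp A \<Longrightarrow> b \<in> supp B \<Longrightarrow> a + b = a0 + b0 \<Longrightarrow> a = a0"
  shows "a0 + b0 \<in> supp (ser_mult A B)"
proof -
  have "{(a, b). a \<in> supp A \<and> b \<in> supp B \<and> a + b = a0 + b0} = {(a0, b0)}"
    using assms by auto (metis add_left_cancel)
  then have "ser_mult A B (a0 + b0) = A a0 * B b0"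
    unfolding ser_mult_def by simp
  then show ?thesis using assms(1,2) by (simp add: supp_def)
qed

lemma mag_greatest:
  assumes "gb_series T" "T \<noteq> (\<lambda>_. 0)"
  shows mag_in_supp: "mag T \<in> supp T" and le_mag: "b \<in> supp T \<Longrightarrow> b \<le> mag T"
proof -
  obtain x where "x \<in> supp T" using assms(2) unfolding supp_def by auto
  then obtain z where z: "z \<in> supp T" "\<And>y. y \<in> supp T \<Longrightarrow> y \<le> z"
    using grid_based_subset_has_greatest assms(1) unfolding gb_series_def by blast
  then have "mag T = z" unfolding mag_def by (intro Greatest_equality) auto
  then show "mag T \<in> supp T" "b \<in> supp T \<Longrightarrow> b \<le> mag T" using z by auto
qed

lemma witnesses_diff_mag: "witnesses mu T \<Longrightarrow> b \<in> supp T \<Longrightarrow> b - mag T \<in> mstar mu"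
  unfolding witnesses_def by force

lemma supp_ser_mult_witnessed:
  assumes A: "gb_series A" and B: "gb_series B" "witnesses mu B"
    and "a' \<in> supp A" "a1 - a' \<in> mstar mu"
  obtains a where "a \<in> supp A" "a1 - a \<in> mstar mu" "a + mag B \<in> supp (ser_mult A B)"
proof -
  define T where "T = {a \<in> supp A. a1 - a \<in> mstar mu}"
  obtain a where a: "a \<in> T" "\<And>y. y \<in> T \<Longrightarrow> y \<le> a"
    using grid_based_subset_has_greatest[of "supp A" T a'] A assms(4,5)
    unfolding gb_series_def T_def by blast
  have B0: "B \<noteq> (\<lambda>_. 0)" using B(2) unfolding witnesses_def by simp
  have "a + mag B \<in> supp (ser_mult A B)"
  proof (rule supp_ser_mult_unique_decomposition)
    show "a \<in> supp A" using a(1) T_def by simp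
    show "mag B \<in> supp B" using mag_in_supp[OF B(1) B0] .
  next
    fix a'' b
    assume a'': "a'' \<in> supp A" and b: "b \<in> supp B" and sum: "a'' + b = a + mag B"
    have "a1 - a'' = (a1 - a) + (b - mag B)"
      using sum by (simp add: algebra_simps eq_diff_eq)
    also have "\<dots> \<in> mstar mu"
      using a(1) witnesses_diff_mag[OF B(2) b] unfolding T_def by (blast intro: mstar_add)
    finally have "a'' \<in> T" using a'' unfolding T_def by blast
    then have "a'' \<le> a" using a(2) by blast
    moreover have "a + mag B \<le> a'' + mag B"
      using sum le_mag[OF B(1) B0 b] by (metis add_left_mono)
    ultimately show "a'' = a" by simp
  qed
  then show ?thesis using that a(1) T_def by blast
qed

theorem proposition3p8:
  fixes A1 A2 B1 B2 :: "'g::linordered_ab_group_add \<Rightarrow> real"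
    and mu :: "'g set"
  assumes "gb_series A1" and "gb_series A2" and "gb_series B1" and "gb_series B2"
    and "ratio_set mu"
    and "ser_prec mu A1 A2"
    and "ser_prec mu B1 B2"
    and "witnesses mu B2"
  shows "ser_prec mu (ser_mult A1 B1) (ser_mult A2 B2)"
proof (unfold ser_prec_def, intro ballI)
  fix x
  assume "x \<in> supp (ser_mult A1 B1)"
  then obtain a1 b1 where ab1: "a1 \<in> supp A1" "b1 \<in> supp B1" "a1 + b1 = x"
    by (rule supp_ser_mult_decompose)
  obtain a2 where a2: "a2 \<in> supp A2" "a1 - a2 \<in> mplus mu"
    using assms(6) ab1(1) unfolding ser_prec_def mono_prec_def by blast
  obtain b2 where b2: "b2 \<in> supp B2" "b1 - b2 \<in> mplus mu"
    using assms(7) ab1(2) unfolding ser_prec_def mono_prec_def by blast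
  obtain a where a: "a1 - a \<in> mstar mu" "a + mag B2 \<in> supp (ser_mult A2 B2)"
    using supp_ser_mult_witnessed[OF assms(2,4,8) a2(1)] a2(2) mplus_subset_mstar by blast
  have "x - (a + mag B2) = (b1 - b2) + ((a1 - a) + (b2 - mag B2))"
    using ab1(3) by (simp add: algebra_simps)
  also have "\<dots> \<in> mplus mu"
    using b2 a(1) witnesses_diff_mag[OF assms(8)] by (blast intro: mplus_add_mstar mstar_add)
  finally show "\<exists>b\<in>supp (ser_mult A2 B2). mono_prec mu x b"
    using a(2) unfolding mono_prec_def by blast
qed

end
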